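(* Let $\alpha$ be an algebraic integer lying in a quadratic number field. Then there is a natural number $n$ such that $\alpha+n$ is a chromatic root.
   Context: For a finite simple graph $G$, the chromatic polynomial $P_G(q)$ is the unique polynomial whose value at each positive integer $q$ is the number of proper colourings of $G$ with $q$ colours. A chromatic root is a complex number $\alpha$ such that $P_G(\alpha)=0$ for some finite simple graph $G$. A quadratic number field is a field extension of $\mathbb{Q}$ of degree $2$. *)

theory Defs
  imports "HOL-Computational_Algebra.Polynomial" "HOL-Library.FuncSet" Complex_Main
begin

definition finite_simple_graph :: "nat set \<Rightarrow> (nat \<Rightarrow> nat \<Rightarrow> bool) \<Rightarrow> bool" where
  "finite_simple_graph V E \<longleftrightarrow> finite V \<and> (\<forall>u v. E u v \<longrightarrow> E v u) \<and> (\<forall>u. \<not> E u u)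
     \<and> (\<forall>u v. E u v \<longrightarrow> u \<in> V \<and> v \<in> V)"

definition num_proper_colourings :: "nat set \<Rightarrow> (nat \<Rightarrow> nat \<Rightarrow> bool) \<Rightarrow> nat \<Rightarrow> nat" where
  "num_proper_colourings V E q =
     card {c \<in> V \<rightarrow>\<^sub>E {..<q}. \<forall>u\<in>V. \<forall>v\<in>V. E u v \<longrightarrow> c u \<noteq> c v}"

definition chromatic_poly :: "nat set \<Rightarrow> (nat \<Rightarrow> nat \<Rightarrow> bool) \<Rightarrow> int poly" where
  "chromatic_poly V E = (THE p. \<forall>q::nat. q > 0 \<longrightarrow> poly p (int q) = int (num_proper_colourings V E q))"

definition chromatic_root :: "complex \<Rightarrow> bool" where
  "chromatic_root \<alpha> \<longleftrightarrow> (\<exists>V E. finite_simple_graph V E \<and>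
       poly (map_poly of_int (chromatic_poly V E)) \<alpha> = 0)"

text \<open>A quadratic number field, viewed as a subfield K of the complex numbers
  of degree 2 over the rationals: K has a Q-basis {1, w}.\<close>
definition subfield_of_complex :: "complex set \<Rightarrow> bool" where
  "subfield_of_complex K \<longleftrightarrow> 0 \<in> K \<and> 1 \<in> K \<and> (\<forall>x\<in>K. \<forall>y\<in>K. x + y \<in> K \<and> x * y \<in> K)
     \<and> (\<forall>x\<in>K. - x \<in> K) \<and> (\<forall>x\<in>K. x \<noteq> 0 \<longrightarrow> inverse x \<in> K)"

definition quadratic_number_field :: "complex set \<Rightarrow> bool" where
  "quadratic_number_field K \<longleftrightarrow> subfield_of_complex K \<and>
     (\<exists>w\<in>K. \<forall>x\<in>K. \<exists>!ab. fst ab \<in> \<rat> \<and> snd ab \<in> \<rat> \<and> x = fst ab + snd ab * w)"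

end

theory Submission
  imports Defs "Berlekamp_Zassenhaus.Factor_Bound"
begin

text \<open>
  An algebraic integer \<open>\<alpha>\<close> of a quadratic field satisfies a monic integer quadratic
  \<open>x\<^sup>2 - t x + s\<close>. Take the clique on \<open>a + b\<close> vertices, add a vertex \<open>u\<close> joined to
  \<open>a\<close> of them, and a vertex \<open>v\<close> joined to \<open>u\<close> and to the other \<open>b\<close>. Colouring the clique
  and \<open>u\<close> first, \<open>v\<close> has \<open>q - b\<close> or \<open>q - b - 1\<close> colours left, according as \<open>u\<close> repeats
  a colour of those \<open>b\<close> vertices or not; so the chromatic polynomial is
  \<open>q (q - 1) \<dots> (q - a - b + 1) ((q - a)(q - b) - (q - a - b))\<close>. Its quadratic factor
  \<open>q\<^sup>2 - (a + b + 1) q + ab + a + b\<close> becomes \<open>x\<^sup>2 - t x + s\<close> under \<open>q = x + n\<close> for suitable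
  natural numbers \<open>a, b, n\<close>, whatever the integers \<open>t, s\<close> are.
\<close>

definition proper_colourings :: "nat set \<Rightarrow> (nat \<Rightarrow> nat \<Rightarrow> bool) \<Rightarrow> nat \<Rightarrow> (nat \<Rightarrow> nat) set" where
  "proper_colourings V E q = {c \<in> V \<rightarrow>\<^sub>E {..<q}. \<forall>u\<in>V. \<forall>v\<in>V. E u v \<longrightarrow> c u \<noteq> c v}"

lemma num_proper_colourings_eq_card: "num_proper_colourings V E q = card (proper_colourings V E q)"
  by (simp add: num_proper_colourings_def proper_colourings_def)

lemma finite_proper_colourings: "finite V \<Longrightarrow> finite (proper_colourings V E q)"
  unfolding proper_colourings_def by (rule finite_subset[OF _ finite_PiE[of V "\<lambda>_. {..<q}"]]) auto

lemma inj_on_proper_colouring: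
  assumes "c \<in> proper_colourings V E q" "S \<subseteq> V" "\<forall>x\<in>S. \<forall>y\<in>S. x \<noteq> y \<longrightarrow> E x y"
  shows "inj_on c S"
  using assms unfolding proper_colourings_def inj_on_def by blast

definition join_vertex :: "(nat \<Rightarrow> nat \<Rightarrow> bool) \<Rightarrow> nat \<Rightarrow> nat set \<Rightarrow> nat \<Rightarrow> nat \<Rightarrow> bool" where
  "join_vertex E v S = (\<lambda>x y. E x y \<or> (x = v \<and> y \<in> S) \<or> (y = v \<and> x \<in> S))"

lemma bij_betw_proper_colourings_join_vertex:
  assumes "v \<notin> V" "S \<subseteq> V" and "\<forall>x y. E x y \<longrightarrow> x \<in> V \<and> y \<in> V"
  shows "bij_betw (\<lambda>(c, k). c(v := k)) (SIGMA c:proper_colourings V E q. {..<q} - c ` S)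
           (proper_colourings (insert v V) (join_vertex E v S) q)"
proof (rule bij_betw_byWitness[where f' = "\<lambda>d. (d(v := undefined), d v)"])
  have "c v = undefined" if "c \<in> proper_colourings V E q" for c
    using that \<open>v \<notin> V\<close> by (auto simp: proper_colourings_def PiE_def extensional_def)
  then show "\<forall>x\<in>SIGMA c:proper_colourings V E q. {..<q} - c ` S.
      (\<lambda>d. (d(v := undefined), d v)) ((\<lambda>(c, k). c(v := k)) x) = x"
    by (auto simp: fun_upd_idem_iff)
  show "\<forall>d\<in>proper_colourings (insert v V) (join_vertex E v S) q.
      (\<lambda>(c, k). c(v := k)) (d(v := undefined), d v) = d"
    by simp
  have "c(v := k) \<in> proper_colourings (insert v V) (join_vertex E v S) q"
    if c: "c \<in> proper_colourings V E q" and k: "k \<in> {..<q} - c ` S" for c k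
  proof -
    from k have "\<And>x. x \<in> S \<Longrightarrow> c x \<noteq> k" by auto
    with c k assms show ?thesis
      unfolding proper_colourings_def join_vertex_def by (auto simp: PiE_def extensional_def)
  qed
  then show "(\<lambda>(c, k). c(v := k)) ` (SIGMA c:proper_colourings V E q. {..<q} - c ` S)
      \<subseteq> proper_colourings (insert v V) (join_vertex E v S) q"
    by auto
  have "d(v := undefined) \<in> proper_colourings V E q \<and> d v \<in> {..<q} - d(v := undefined) ` S"
    if d: "d \<in> proper_colourings (insert v V) (join_vertex E v S) q" for d
  proof -
    from d have "d \<in> insert v V \<rightarrow>\<^sub>E {..<q}"
      and proper: "\<And>x y. x \<in> insert v V \<Longrightarrow> y \<in> insert v V \<Longrightarrow> join_vertex E v S x y \<Longrightarrow> d x \<noteq> d y"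
      unfolding proper_colourings_def by auto
    then have "d(v := undefined) \<in> V \<rightarrow>\<^sub>E {..<q}" "d v < q"
      using \<open>v \<notin> V\<close> by (auto simp: PiE_def extensional_def)
    moreover have "d v \<noteq> d x" if "x \<in> S" for x
      using proper[of v x] that assms(2) by (auto simp: join_vertex_def)
    moreover have "d x \<noteq> d y" if "x \<in> V" "y \<in> V" "E x y" for x y
      using proper[of x y] that by (auto simp: join_vertex_def)
    ultimately show ?thesis
      using assms unfolding proper_colourings_def by auto
  qed
  then show "(\<lambda>d. (d(v := undefined), d v)) ` proper_colourings (insert v V) (join_vertex E v S) q
      \<subseteq> (SIGMA c:proper_colourings V E q. {..<q} - c ` S)"
    by (intro image_subsetI) (simp only: mem_Sigma_iff)
qed

lemma card_proper_colourings_join_vertex: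
  assumes "finite V" "v \<notin> V" "S \<subseteq> V" and "\<forall>x y. E x y \<longrightarrow> x \<in> V \<and> y \<in> V"
  shows "int (card (proper_colourings (insert v V) (join_vertex E v S) q))
           = (\<Sum>c\<in>proper_colourings V E q. int q - int (card (c ` S)))"
proof -
  have "card (proper_colourings (insert v V) (join_vertex E v S) q)
      = card (SIGMA c:proper_colourings V E q. {..<q} - c ` S)"
    using bij_betw_proper_colourings_join_vertex[OF assms(2-)] by (rule bij_betw_same_card[symmetric])
  also have "\<dots> = (\<Sum>c\<in>proper_colourings V E q. card ({..<q} - c ` S))"
    using \<open>finite V\<close> by (simp add: card_SigmaI finite_proper_colourings)
  finally show ?thesis
  proof (simp only: of_nat_sum, intro sum.cong refl)
    fix c assume "c \<in> proper_colourings V E q"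
    then have "c ` S \<subseteq> {..<q}"
      using \<open>S \<subseteq> V\<close> by (auto simp: proper_colourings_def PiE_def)
    then show "int (card ({..<q} - c ` S)) = int q - int (card (c ` S))"
      using card_mono[of "{..<q}" "c ` S"] by (simp add: card_Diff_subset finite_subset of_nat_diff)
  qed
qed

definition clique_edges :: "nat \<Rightarrow> nat \<Rightarrow> nat \<Rightarrow> bool" where
  "clique_edges m x y = (x < m \<and> y < m \<and> x \<noteq> y)"

lemma card_proper_colourings_clique_join_vertex:
  assumes "S \<subseteq> {..<m}"
  shows "int (card (proper_colourings (insert m {..<m}) (join_vertex (clique_edges m) m S) q))
           = int (card (proper_colourings {..<m} (clique_edges m) q)) * (int q - int (card S))"
proof -
  have "int (card (proper_colourings (insert m {..<m}) (join_vertex (clique_edges m) m S) q))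
      = (\<Sum>c\<in>proper_colourings {..<m} (clique_edges m) q. int q - int (card (c ` S)))"
    using assms by (intro card_proper_colourings_join_vertex) (auto simp: clique_edges_def)
  also have "\<dots> = (\<Sum>c\<in>proper_colourings {..<m} (clique_edges m) q. int q - int (card S))"
  proof (intro sum.cong refl)
    fix c assume "c \<in> proper_colourings {..<m} (clique_edges m) q"
    then have "inj_on c S"
      using assms by (rule inj_on_proper_colouring) (use assms in \<open>auto simp: clique_edges_def\<close>)
    then show "int q - int (card (c ` S)) = int q - int (card S)" by (simp add: card_image)
  qed
  finally show ?thesis by simp
qed

lemma card_proper_colourings_clique:
  "int (card (proper_colourings {..<m} (clique_edges m) q)) = (\<Prod>i<m. int q - int i)"
proof (induction m)
  case 0
  have "proper_colourings {..<0} (clique_edges 0) q = {\<lambda>_. undefined}"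
    by (auto simp: proper_colourings_def)
  then show ?case by simp
next
  case (Suc m)
  have "join_vertex (clique_edges m) m {..<m} = clique_edges (Suc m)"
    by (auto simp: fun_eq_iff join_vertex_def clique_edges_def)
  then show ?case
    using card_proper_colourings_clique_join_vertex[of "{..<m}" m q] Suc.IH
    by (simp add: lessThan_Suc)
qed

lemma proper_colourings_join_vertex_eq_filter:
  assumes "v \<in> V" "T \<subseteq> V"
  shows "proper_colourings V (join_vertex E v T) q = {c \<in> proper_colourings V E q. c v \<notin> c ` T}"
  using assms unfolding proper_colourings_def join_vertex_def by (auto simp: image_iff; blast)

lemma join_vertex_join_vertex: "join_vertex (join_vertex E v S) v T = join_vertex E v (S \<union> T)"
  by (auto simp: fun_eq_iff join_vertex_def)

definition gadget_vertices :: "nat \<Rightarrow> nat \<Rightarrow> nat set" where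
  "gadget_vertices a b = insert (Suc (a + b)) (insert (a + b) {..<a + b})"

definition gadget_edges :: "nat \<Rightarrow> nat \<Rightarrow> nat \<Rightarrow> nat \<Rightarrow> bool" where
  "gadget_edges a b = join_vertex (join_vertex (clique_edges (a + b)) (a + b) {..<a})
                         (Suc (a + b)) (insert (a + b) {a..<a + b})"

lemma finite_simple_graph_gadget: "finite_simple_graph (gadget_vertices a b) (gadget_edges a b)"
  unfolding finite_simple_graph_def gadget_vertices_def gadget_edges_def join_vertex_def clique_edges_def
  by auto

lemma card_proper_colourings_gadget:
  "int (card (proper_colourings (gadget_vertices a b) (gadget_edges a b) q))
     = (\<Prod>i<a + b. int q - int i) * ((int q - int a) * (int q - int b) - (int q - int a - int b))"
proof -
  define m where "m = a + b"
  define U where "U = insert m {..<m}"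
  define E where "E = join_vertex (clique_edges m) m {..<a}"
  define F where "F = (\<Prod>i<m. int q - int i)"
  let ?C = "proper_colourings U E q"
  have "int (card (proper_colourings (gadget_vertices a b) (gadget_edges a b) q))
      = (\<Sum>c\<in>?C. int q - int (card (c ` insert m {a..<m})))"
    unfolding gadget_vertices_def gadget_edges_def m_def[symmetric] U_def E_def
    by (rule card_proper_colourings_join_vertex) (auto simp: join_vertex_def clique_edges_def m_def)
  also have "\<dots> = (\<Sum>c\<in>?C. (int q - int b) - (if c m \<in> c ` {a..<m} then 0 else 1))"
  proof (intro sum.cong refl)
    fix c assume "c \<in> ?C"
    then have "inj_on c {a..<m}"
      by (rule inj_on_proper_colouring) (auto simp: U_def E_def join_vertex_def clique_edges_def)
    then have "card (c ` {a..<m}) = b" by (simp add: card_image m_def)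
    then show "int q - int (card (c ` insert m {a..<m}))
        = (int q - int b) - (if c m \<in> c ` {a..<m} then 0 else 1)"
      by (simp add: card_insert_if)
  qed
  also have "\<dots> = int (card ?C) * (int q - int b) - int (card {c \<in> ?C. c m \<notin> c ` {a..<m}})"
    using finite_proper_colourings[of U E q] by (simp add: U_def sum_subtractf sum.If_cases Int_def)
  also have "{c \<in> ?C. c m \<notin> c ` {a..<m}} = proper_colourings U (join_vertex (clique_edges m) m {..<m}) q"
    unfolding E_def by (subst proper_colourings_join_vertex_eq_filter[symmetric])
      (auto simp: U_def join_vertex_join_vertex m_def ivl_disj_un_one(2))
  also have "int (card ?C) = F * (int q - int a)"
    unfolding U_def E_def F_def
    by (simp add: card_proper_colourings_clique_join_vertex card_proper_colourings_clique m_def)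
  also have "int (card (proper_colourings U (join_vertex (clique_edges m) m {..<m}) q)) = F * (int q - int m)"
    unfolding U_def F_def
    by (simp add: card_proper_colourings_clique_join_vertex card_proper_colourings_clique)
  finally show ?thesis
    unfolding F_def m_def by (simp add: algebra_simps)
qed

definition gadget_poly :: "nat \<Rightarrow> nat \<Rightarrow> int poly" where
  "gadget_poly a b = (\<Prod>i<a + b. [:- int i, 1:]) * [:int (a * b + a + b), - int (a + b + 1), 1:]"

lemma poly_gadget_poly:
  "poly (gadget_poly a b) (int q) = int (num_proper_colourings (gadget_vertices a b) (gadget_edges a b) q)"
  using card_proper_colourings_gadget[of a b q]
  by (simp add: num_proper_colourings_eq_card gadget_poly_def poly_prod algebra_simps power2_eq_square)

lemma poly_gadget_poly_eq_0:
  fixes z :: "'a :: comm_ring_1"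
  assumes "z\<^sup>2 - of_nat (a + b + 1) * z + of_nat (a * b + a + b) = 0"
  shows "poly (map_poly of_int (gadget_poly a b)) z = 0"
proof -
  have "poly (map_poly of_int [:int (a * b + a + b), - int (a + b + 1), 1:]) z = 0"
    using assms by (simp add: algebra_simps power2_eq_square)
  then show ?thesis
    by (simp only: gadget_poly_def of_int_poly_hom.hom_mult poly_mult mult_zero_right)
qed

lemma int_poly_eqI:
  fixes p r :: "int poly"
  assumes "\<And>q::nat. q > 0 \<Longrightarrow> poly p (int q) = poly r (int q)"
  shows "p = r"
proof (rule ccontr)
  assume "p \<noteq> r"
  then have "finite {x. poly (p - r) x = 0}"
    by (intro poly_roots_finite) simp
  moreover have "poly (p - r) (int (Suc n)) = 0" for n
    using assms[of "Suc n"] by simp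
  then have "range (\<lambda>n. int (Suc n)) \<subseteq> {x. poly (p - r) x = 0}"
    by auto
  ultimately have "finite (range (\<lambda>n. int (Suc n)))"
    by (rule finite_subset[rotated])
  then show False
    by (simp add: finite_image_iff inj_on_def)
qed

lemma chromatic_poly_eqI:
  assumes "\<And>q. q > 0 \<Longrightarrow> poly p (int q) = int (num_proper_colourings V E q)"
  shows "chromatic_poly V E = p"
  unfolding chromatic_poly_def by (rule the_equality) (auto intro: int_poly_eqI simp: assms)

lemma chromatic_poly_gadget: "chromatic_poly (gadget_vertices a b) (gadget_edges a b) = gadget_poly a b"
  by (rule chromatic_poly_eqI) (rule poly_gadget_poly)

interpretation of_rat_poly_hom: map_poly_idom_hom of_rat ..

lemma rat_poly_eq_0_if_irrational_root:
  fixes r :: "rat poly" and \<alpha> :: "'a :: field_char_0"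
  assumes "degree r \<le> 1" "\<alpha> \<notin> \<rat>" "poly (map_poly of_rat r) \<alpha> = 0"
  shows "r = 0"
proof -
  have r: "r = [:Polynomial.coeff r 0, Polynomial.coeff r 1:]"
    using assms(1) by (intro poly_eqI) (auto simp: coeff_pCons coeff_eq_0 split: nat.splits)
  then have "poly (map_poly of_rat [:Polynomial.coeff r 0, Polynomial.coeff r 1:]) \<alpha> = 0"
    using assms(3) by metis
  then have root: "of_rat (Polynomial.coeff r 0) + of_rat (Polynomial.coeff r 1) * \<alpha> = 0"
    by (simp add: hom_distribs mult.commute)
  have "Polynomial.coeff r 1 = 0"
  proof (rule ccontr)
    assume "Polynomial.coeff r 1 \<noteq> 0"
    then have "\<alpha> = - of_rat (Polynomial.coeff r 0) / of_rat (Polynomial.coeff r 1)"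
      using root by (simp add: field_simps eq_neg_iff_add_eq_0 add.commute)
    with assms(2) show False by simp
  qed
  with root r show ?thesis by simp
qed

lemma rat_quadratic_dvd_if_common_irrational_root:
  fixes g p :: "rat poly" and \<alpha> :: "'a :: field_char_0"
  assumes "degree g = 2" "\<alpha> \<notin> \<rat>"
    and "poly (map_poly of_rat g) \<alpha> = 0" "poly (map_poly of_rat p) \<alpha> = 0"
  shows "g dvd p"
proof -
  have "degree (p mod g) \<le> 1"
    using degree_mod_less[of g p] assms(1) by (cases "g = 0"; cases "p mod g = 0") auto
  moreover have "poly (map_poly of_rat (p mod g)) \<alpha> = 0"
    using assms(3,4) by (simp add: minus_div_mult_eq_mod[symmetric] hom_distribs)
  ultimately have "p mod g = 0"
    by (rule rat_poly_eq_0_if_irrational_root[OF _ assms(2)])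
  then show ?thesis by (simp add: mod_eq_0_iff_dvd)
qed

lemma monic_factor_of_monic_int_poly_is_int_poly:
  fixes p :: "int poly" and g h :: "rat poly"
  assumes "lead_coeff p = 1" "map_poly of_int p = g * h" "lead_coeff g = 1"
  shows "\<exists>g'. g = map_poly of_int g'"
proof -
  have "p \<noteq> 0" using assms(1) by auto
  have "content p dvd 1"
    using content_dvd_coeff[of p "degree p"] assms(1) by simp
  then have "content p = 1"
    using content_ge_0_int[of p] by auto
  obtain r g' where g': "rat_to_normalized_int_poly g = (r, g')" by force
  obtain s h' where h': "rat_to_normalized_int_poly h = (s, h')" by force
  have "p = g' * h'" \<comment> \<open>Gauss's lemma\<close>
    by (rule rat_to_int_factor_content_1[OF \<open>content p = 1\<close> assms(2) g' h' \<open>p \<noteq> 0\<close>])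
  then have "lead_coeff g' * lead_coeff h' = 1"
    using assms(1) by (simp add: lead_coeff_mult)
  then have "lead_coeff g' = 1 \<or> lead_coeff g' = -1"
    using zmult_eq_1_iff by blast
  moreover have "g = Polynomial.smult r (map_poly of_int g')" "r > 0"
    using rat_to_normalized_int_poly[OF g'] by auto
  moreover from this have "r * of_int (lead_coeff g') = 1"
    using assms(3) by simp
  ultimately have "r = 1"
    by auto
  with \<open>g = Polynomial.smult r (map_poly of_int g')\<close> show ?thesis by auto
qed

lemma algebraic_int_monic_rat_quadratic_is_int_poly:
  fixes \<alpha> :: "'a :: field_char_0" and g :: "rat poly"
  assumes "algebraic_int \<alpha>" "\<alpha> \<notin> \<rat>"
    and "degree g = 2" "lead_coeff g = 1" "poly (map_poly of_rat g) \<alpha> = 0"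
  shows "\<exists>g'. g = map_poly of_int g'"
proof -
  obtain p where p: "poly (map_poly of_int p) \<alpha> = 0" "lead_coeff p = 1"
    using assms(1) algebraic_int_altdef_ipoly by blast
  have "map_poly of_rat (map_poly of_int p) = (map_poly of_int p :: 'a poly)"
    by (simp add: map_poly_map_poly o_def)
  then have "g dvd map_poly of_int p"
    using p(1) by (intro rat_quadratic_dvd_if_common_irrational_root[OF assms(3,2,5)]) simp
  then obtain h where "map_poly of_int p = g * h" by (elim dvdE)
  then show ?thesis
    using monic_factor_of_monic_int_poly_is_int_poly p(2) assms(4) by blast
qed

lemma quadratic_number_field_rat_quadratic:
  assumes "quadratic_number_field K" "\<alpha> \<in> K" "\<alpha> \<notin> \<rat>"
  shows "\<exists>U V :: rat. \<alpha>\<^sup>2 + of_rat U * \<alpha> + of_rat V = 0"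
proof -
  obtain w where rep: "\<forall>x\<in>K. \<exists>!ab. fst ab \<in> \<rat> \<and> snd ab \<in> \<rat> \<and> x = fst ab + snd ab * w"
    using assms(1) unfolding quadratic_number_field_def by blast
  have coords: "\<exists>a b :: rat. x = of_rat a + of_rat b * w" if "x \<in> K" for x
    using rep that by (metis Rats_cases)
  have "\<alpha> * \<alpha> \<in> K"
    using assms(1,2) unfolding quadratic_number_field_def subfield_of_complex_def by blast
  obtain a1 b1 where \<alpha>: "\<alpha> = of_rat a1 + of_rat b1 * w"
    using coords assms(2) by blast
  obtain a2 b2 where \<alpha>\<alpha>: "\<alpha> * \<alpha> = of_rat a2 + of_rat b2 * w"
    using coords \<open>\<alpha> * \<alpha> \<in> K\<close> by blast
  have "of_rat b1 \<noteq> (0 :: complex)"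
    using \<alpha> assms(3) by auto
  have "\<alpha>\<^sup>2 + of_rat (- b2 / b1) * \<alpha> + of_rat (b2 * a1 / b1 - a2) = 0"
    unfolding power2_eq_square \<alpha>\<alpha>
    by (subst \<alpha>) (use \<open>of_rat b1 \<noteq> 0\<close> in
      \<open>simp add: field_simps of_rat_divide of_rat_mult of_rat_diff of_rat_minus\<close>)
  then show ?thesis by blast
qed

lemma algebraic_int_in_quadratic_field_int_quadratic:
  assumes "quadratic_number_field K" "\<alpha> \<in> K" "algebraic_int \<alpha>"
  shows "\<exists>t s :: int. \<alpha>\<^sup>2 - of_int t * \<alpha> + of_int s = 0"
proof (cases "\<alpha> \<in> \<rat>")
  case True
  then obtain k where "\<alpha> = of_int k"
    using assms(3) rational_algebraic_int_is_int by (metis Ints_cases)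
  then have "\<alpha>\<^sup>2 - of_int (2 * k) * \<alpha> + of_int (k\<^sup>2) = 0"
    by (simp add: power2_eq_square algebra_simps)
  then show ?thesis by blast
next
  case False
  then obtain U V where root: "\<alpha>\<^sup>2 + of_rat U * \<alpha> + of_rat V = 0"
    using quadratic_number_field_rat_quadratic assms(1,2) by blast
  then have "poly (map_poly of_rat [:V, U, 1:]) \<alpha> = 0"
    by (simp add: hom_distribs algebra_simps power2_eq_square)
  then obtain g where g: "[:V, U, 1:] = map_poly of_int g"
    using algebraic_int_monic_rat_quadratic_is_int_poly[OF assms(3) False, of "[:V, U, 1:]"] by auto
  have "U = of_int (Polynomial.coeff g 1)" "V = of_int (Polynomial.coeff g 0)"
    using arg_cong[OF g, of "\<lambda>f. Polynomial.coeff f 1"] arg_cong[OF g, of "\<lambda>f. Polynomial.coeff f 0"]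
    by simp_all
  then have "\<alpha>\<^sup>2 - of_int (- Polynomial.coeff g 1) * \<alpha> + of_int (Polynomial.coeff g 0) = 0"
    using root by simp
  then show ?thesis by blast
qed

lemma int_quadratic_is_shifted_gadget_quadratic:
  fixes t s :: int
  shows "\<exists>a b n :: nat. \<forall>z :: 'a :: comm_ring_1.
           (z + of_nat n)\<^sup>2 - of_nat (a + b + 1) * (z + of_nat n) + of_nat (a * b + a + b)
             = z\<^sup>2 - of_int t * z + of_int s"
proof -
  define j where "j = \<bar>s\<bar> + \<bar>t\<bar>"
  define k where "k = s + j * (j + t)"
  have "\<bar>s\<bar> \<le> j * (j + t)"
  proof (cases "j = 0")
    case True
    then have "s = 0" unfolding j_def by linarith
    with True show ?thesis by simp
  next
    case False
    then have "1 \<le> j" "\<bar>s\<bar> \<le> j + t" unfolding j_def by linarith+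
    then have "j + t \<le> j * (j + t)" using mult_right_mono[of 1 j "j + t"] by simp
    with \<open>\<bar>s\<bar> \<le> j + t\<close> show ?thesis by linarith
  qed
  then have "k \<ge> 0" "j + t \<ge> 0" unfolding k_def j_def by linarith+
  \<comment> \<open>For \<open>b = k\<close>, \<open>n = k + j + 1\<close> and \<open>a = n + j + t\<close> the shift conditions reduce to
    \<open>k = s + j (j + t)\<close>; the choice of \<open>j\<close> makes \<open>a\<close>, \<open>b\<close>, \<open>n\<close> nonnegative.\<close>
  define a b n where "a = nat (k + 2 * j + 1 + t)" and "b = nat k" and "n = nat (k + j + 1)"
  have "int a = k + 2 * j + 1 + t" "int b = k" "int n = k + j + 1"
    using \<open>k \<ge> 0\<close> \<open>j + t \<ge> 0\<close> j_def unfolding a_def b_def n_def by simp_all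
  then have lin: "int (a + b + 1) = 2 * int n + t"
    and quad: "int (a * b + a + b) = s + (int n)\<^sup>2 + t * int n"
    by (simp_all add: k_def algebra_simps power2_eq_square)
  have "(z + of_nat n)\<^sup>2 - of_nat (a + b + 1) * (z + of_nat n) + of_nat (a * b + a + b)
      = z\<^sup>2 - of_int t * z + of_int s" for z :: 'a
  proof -
    have "(of_nat (a + b + 1) :: 'a) = of_int (2 * int n + t)"
      "(of_nat (a * b + a + b) :: 'a) = of_int (s + (int n)\<^sup>2 + t * int n)"
      using lin quad by (metis of_int_of_nat_eq)+
    then show ?thesis by (simp add: algebra_simps power2_eq_square)
  qed
  then show ?thesis by blast
qed

theorem theorem4:
  fixes \<alpha> :: complex and K :: "complex set"
  assumes "quadratic_number_field K" and "\<alpha> \<in> K" and "algebraic_int \<alpha>"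
  shows "\<exists>n::nat. chromatic_root (\<alpha> + of_nat n)"
proof -
  obtain t s :: int where "\<alpha>\<^sup>2 - of_int t * \<alpha> + of_int s = 0"
    using algebraic_int_in_quadratic_field_int_quadratic[OF assms] by blast
  moreover obtain a b n :: nat where "\<And>z :: complex.
      (z + of_nat n)\<^sup>2 - of_nat (a + b + 1) * (z + of_nat n) + of_nat (a * b + a + b)
        = z\<^sup>2 - of_int t * z + of_int s"
    using int_quadratic_is_shifted_gadget_quadratic[of t s] by blast
  ultimately have "poly (map_poly of_int (gadget_poly a b)) (\<alpha> + of_nat n) = 0"
    by (intro poly_gadget_poly_eq_0) simp
  then have "chromatic_root (\<alpha> + of_nat n)"
    unfolding chromatic_root_def
    using finite_simple_graph_gadget chromatic_poly_gadget by metis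
  then show ?thesis by blast
qed

end
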